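(* For all integers $k,m,\lambda\ge0$ there exists $n\ge0$ with the following property. Let $A_1,\dots,A_n,B_1,\dots,B_n$ be pairwise disjoint subsets of the vertex set of a graph $G$, each of cardinality $m$. Then either there exist $A\subseteq A_1\cup\dots\cup A_n$ and $B\subseteq B_1\cup\dots\cup B_n$ with $|A|=|B|=\lambda$ such that no vertex of $A$ has a neighbour in $B$; or there exist $I,J\subseteq\{1,\dots,n\}$ with $|I|=|J|=k$ such that $\bigcup_{i\in I}A_i$ is $G$-complete with $\bigcup_{j\in J}B_j$.
   Context: For a graph $G$ and $A,B\subseteq V(G)$, $A$ is $G$-complete with $B$ if $A\cap B=\emptyset$ and every vertex of $A$ is adjacent to every vertex of $B$. *)

theory Defs
  imports Main
begin

definition simple_graph :: "'a set \<Rightarrow> ('a \<Rightarrow> 'a \<Rightarrow> bool) \<Rightarrow> bool" where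
  "simple_graph V E \<longleftrightarrow> finite V \<and>
     (\<forall>x y. E x y \<longrightarrow> x \<in> V \<and> y \<in> V \<and> x \<noteq> y \<and> E y x)"

definition G_complete :: "('a \<Rightarrow> 'a \<Rightarrow> bool) \<Rightarrow> 'a set \<Rightarrow> 'a set \<Rightarrow> bool" where
  "G_complete E X Y \<longleftrightarrow> X \<inter> Y = {} \<and> (\<forall>x\<in>X. \<forall>y\<in>Y. E x y)"

end

theory Submission
  imports Defs "HOL-Library.Ramsey"
begin

text \<open>Enumerate every block as \<open>A i = {a\<^sub>i 0, \<dots>, a\<^sub>i (m - 1)}\<close> and
  \<open>B j = {b\<^sub>j 0, \<dots>, b\<^sub>j (m - 1)}\<close>. Colour a pair \<open>i < j\<close> of indices by \<open>None\<close> if \<open>A i\<close> is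
  complete to \<open>B j\<close>, and otherwise by positions \<open>(p, q)\<close> with \<open>a\<^sub>i p\<close> not adjacent to
  \<open>b\<^sub>j q\<close>. There are only \<open>m\<^sup>2 + 1\<close> colours, so by Ramsey's theorem \<open>2N\<close> indices,
  \<open>N = max k l\<close>, are homogeneous once \<open>n\<close> is large; split them into the \<open>N\<close> lowest and
  the \<open>N\<close> highest. For colour \<open>None\<close> the lower \<open>A\<close>-blocks are complete to the upper
  \<open>B\<close>-blocks. For colour \<open>(p, q)\<close> the transversals \<open>a\<^sub>i p\<close> and \<open>b\<^sub>j q\<close> are mutually
  non-adjacent, and they have \<open>N\<close> distinct elements each because the blocks are disjoint.\<close>

definition homogeneous_pairs_bound :: "nat \<Rightarrow> 'c set \<Rightarrow> nat \<Rightarrow> bool" where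
  "homogeneous_pairs_bound n C s \<longleftrightarrow>
     (\<forall>f. (\<forall>i\<in>{1..n}. \<forall>j\<in>{1..n}. i < j \<longrightarrow> f i j \<in> C) \<longrightarrow>
       (\<exists>H u. H \<subseteq> {1..n} \<and> card H = s \<and> (\<forall>i\<in>H. \<forall>j\<in>H. i < j \<longrightarrow> f i j = u)))"

lemma ex_homogeneous_pairs_bound:
  fixes C :: "'c set"
  assumes "finite C"
  shows "\<exists>n. homogeneous_pairs_bound n C s"
proof -
  obtain h where h: "bij_betw h C {0..<card C}"
    using ex_bij_betw_finite_nat[OF assms] by blast
  obtain n :: nat where n: "partn_lst {..<n} (replicate (card C) s) 2"
    using ramsey_full[of "replicate (card C) s" 2] by blast
  have "homogeneous_pairs_bound n C s"
    unfolding homogeneous_pairs_bound_def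
  proof (intro allI impI)
    fix f :: "nat \<Rightarrow> nat \<Rightarrow> 'c"
    assume f: "\<forall>i\<in>{1..n}. \<forall>j\<in>{1..n}. i < j \<longrightarrow> f i j \<in> C"
    define g where "g S = h (f (Suc (Min S)) (Suc (Max S)))" for S
    have "g \<in> nsets {..<n} 2 \<rightarrow> {..<length (replicate (card C) s)}"
    proof
      fix S assume "S \<in> nsets {..<n} 2"
      then obtain x y where "S = {x, y}" "x < n" "y < n" "x \<noteq> y"
        by (auto elim!: nsets2_E)
      then have "f (Suc (Min S)) (Suc (Max S)) \<in> C"
        using f by (auto simp: min_def max_def)
      then show "g S \<in> {..<length (replicate (card C) s)}"
        using h unfolding g_def bij_betw_def by auto
    qed
    then obtain c H where H: "H \<in> nsets {..<n} s" and mono: "g ` nsets H 2 \<subseteq> {c}"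
      using n unfolding partn_lst_def monochromatic_def by fastforce
    have "f i j = the_inv_into C h c" if ij: "i \<in> Suc ` H" "j \<in> Suc ` H" "i < j" for i j
    proof -
      obtain i' j' where i'j': "i = Suc i'" "j = Suc j'" "i' \<in> H" "j' \<in> H" "i' < j'"
        using ij by blast
      then have "{i', j'} \<in> nsets H 2" by (auto simp: nsets_def)
      then have "g {i', j'} = c" using mono by blast
      then have "h (f i j) = c" using i'j' by (simp add: g_def)
      moreover have "i \<in> {1..n}" "j \<in> {1..n}" using i'j' H by (auto simp: nsets_def)
      then have "f i j \<in> C" using f \<open>i < j\<close> by blast
      ultimately show ?thesis
        using h by (metis bij_betw_imp_inj_on the_inv_into_f_f)
    qed
    moreover have "Suc ` H \<subseteq> {1..n}" "card (Suc ` H) = s"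
      using H by (auto simp: nsets_def card_image)
    ultimately show "\<exists>H u. H \<subseteq> {1..n} \<and> card H = s \<and> (\<forall>i\<in>H. \<forall>j\<in>H. i < j \<longrightarrow> f i j = u)"
      by (intro exI[of _ "Suc ` H"] exI[of _ "the_inv_into C h c"]) blast
  qed
  then show ?thesis ..
qed

lemma obtain_lower_upper_subsets:
  fixes H :: "'a::linorder set"
  assumes "finite H" "card H = a + b"
  obtains I J where "I \<subseteq> H" "J \<subseteq> H" "card I = a" "card J = b" "\<forall>i\<in>I. \<forall>j\<in>J. i < j"
proof -
  define xs where "xs = sorted_list_of_set H"
  have xs: "distinct xs" "set xs = H" "length xs = a + b"
    using assms by (simp_all add: xs_def)
  have "sorted_wrt (<) (take a xs @ drop a xs)"
    using assms by (simp add: xs_def)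
  then have "\<forall>i\<in>set (take a xs). \<forall>j\<in>set (drop a xs). i < j"
    unfolding sorted_wrt_append by blast
  moreover have "set (take a xs) \<subseteq> H" "set (drop a xs) \<subseteq> H"
    using set_take_subset[of a xs] set_drop_subset[of a xs] xs(2) by simp_all
  moreover have "card (set (take a xs)) = a" "card (set (drop a xs)) = b"
    using xs by (simp_all add: distinct_card)
  ultimately show ?thesis
    using that[of "set (take a xs)" "set (drop a xs)"] by blast
qed

lemma card_image_of_disjoint_family:
  assumes "\<And>i. i \<in> I \<Longrightarrow> g i \<in> A i"
    and "\<And>i j. i \<in> I \<Longrightarrow> j \<in> I \<Longrightarrow> i \<noteq> j \<Longrightarrow> A i \<inter> A j = {}"
  shows "card (g ` I) = card I"
proof (rule card_image, rule inj_onI)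
  fix i j assume ij: "i \<in> I" "j \<in> I" "g i = g j"
  show "i = j"
    using assms(1)[OF ij(1)] assms(1)[OF ij(2)] assms(2)[OF ij(1,2)] ij(3) by auto
qed

lemma obtain_uniform_enumerations:
  assumes "\<forall>i\<in>S. finite (A i) \<and> card (A i) = m"
  obtains g where "\<forall>i\<in>S. bij_betw (g i) {..<m} (A i)"
proof -
  have "\<forall>i\<in>S. \<exists>g. bij_betw g {..<m} (A i)"
  proof
    fix i assume "i \<in> S"
    then have "finite (A i)" "card (A i) = m" using assms by auto
    then show "\<exists>g. bij_betw g {..<m} (A i)"
      using ex_bij_betw_nat_finite[of "A i"] by (simp add: atLeast0LessThan)
  qed
  from bchoice[OF this] obtain g where "\<forall>i\<in>S. bij_betw (g i) {..<m} (A i)" ..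
  then show ?thesis by (rule that)
qed

lemma G_complete_UN:
  assumes "\<forall>i\<in>I. \<forall>j\<in>J. A i \<inter> B j = {}"
    and "\<forall>i\<in>I. \<forall>j\<in>J. \<forall>x\<in>A i. \<forall>y\<in>B j. E x y"
  shows "G_complete E (\<Union>i\<in>I. A i) (\<Union>j\<in>J. B j)"
  unfolding G_complete_def using assms by blast

lemma obtain_homogeneous_block_pairs:
  fixes A B :: "nat \<Rightarrow> 'a set" and ga gb :: "nat \<Rightarrow> nat \<Rightarrow> 'a"
  assumes ramsey: "homogeneous_pairs_bound n (insert None (Some ` ({..<m} \<times> {..<m}))) (N + N)"
    and ga: "\<forall>i\<in>{1..n}. bij_betw (ga i) {..<m} (A i)"
    and gb: "\<forall>j\<in>{1..n}. bij_betw (gb j) {..<m} (B j)"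
  obtains I J where "I \<subseteq> {1..n}" "J \<subseteq> {1..n}" "card I = N" "card J = N"
    "(\<forall>i\<in>I. \<forall>j\<in>J. \<forall>x\<in>A i. \<forall>y\<in>B j. E x y) \<or>
     (\<exists>p<m. \<exists>q<m. \<forall>i\<in>I. \<forall>j\<in>J. \<not> E (ga i p) (gb j q))"
proof -
  define nonadj where "nonadj i j = (\<lambda>(p, q). p < m \<and> q < m \<and> \<not> E (ga i p) (gb j q))" for i j
  define col where
    "col i j = (if \<exists>pq. nonadj i j pq then Some (SOME pq. nonadj i j pq) else None)" for i j
  have col_Some: "nonadj i j pq" if "col i j = Some pq" for i j pq
    using that someI_ex[of "nonadj i j"] unfolding col_def by (auto split: if_splits)
  have col_None: "\<forall>x\<in>A i. \<forall>y\<in>B j. E x y" if none: "col i j = None" and "i \<in> {1..n}" "j \<in> {1..n}" for i j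
  proof (intro ballI)
    fix x y assume "x \<in> A i" "y \<in> B j"
    then obtain p q where "p < m" "q < m" "x = ga i p" "y = gb j q"
      using bspec[OF ga \<open>i \<in> {1..n}\<close>] bspec[OF gb \<open>j \<in> {1..n}\<close>] unfolding bij_betw_def by blast
    then show "E x y"
      using none unfolding col_def nonadj_def by (auto split: if_splits)
  qed
  have "col i j \<in> insert None (Some ` ({..<m} \<times> {..<m}))" for i j
    using col_Some[of i j] unfolding nonadj_def by (cases "col i j") auto
  then obtain H u where H: "H \<subseteq> {1..n}" "card H = N + N"
    and hom: "\<forall>i\<in>H. \<forall>j\<in>H. i < j \<longrightarrow> col i j = u"
    using spec[OF ramsey[unfolded homogeneous_pairs_bound_def], of col] by blast
  obtain I J where IJ: "I \<subseteq> H" "J \<subseteq> H" "card I = N" "card J = N"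
    and below: "\<forall>i\<in>I. \<forall>j\<in>J. i < j"
    using obtain_lower_upper_subsets[of H N N] H finite_subset by blast
  have col_u: "col i j = u" if "i \<in> I" "j \<in> J" for i j
    using hom below IJ that by blast
  have dichotomy: "(\<forall>i\<in>I. \<forall>j\<in>J. \<forall>x\<in>A i. \<forall>y\<in>B j. E x y) \<or>
     (\<exists>p<m. \<exists>q<m. \<forall>i\<in>I. \<forall>j\<in>J. \<not> E (ga i p) (gb j q))"
  proof (cases "u = None \<or> I = {} \<or> J = {}")
    case True
    have "\<forall>x\<in>A i. \<forall>y\<in>B j. E x y" if "i \<in> I" "j \<in> J" for i j
    proof -
      have "col i j = None" using True col_u that by auto
      moreover have "i \<in> {1..n}" "j \<in> {1..n}" using IJ H that by auto
      ultimately show ?thesis by (rule col_None)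
    qed
    then show ?thesis by blast
  next
    case False
    then obtain p q i0 j0 where "u = Some (p, q)" "i0 \<in> I" "j0 \<in> J" by auto
    then have "nonadj i j (p, q)" if "i \<in> I" "j \<in> J" for i j
      using col_Some col_u that by simp
    then show ?thesis
      using \<open>i0 \<in> I\<close> \<open>j0 \<in> J\<close> unfolding nonadj_def by fastforce
  qed
  have "I \<subseteq> {1..n}" "J \<subseteq> {1..n}" using IJ H by auto
  from this IJ(3,4) dichotomy show ?thesis by (rule that)
qed

lemma anticomplete_or_complete_blocks:
  fixes E :: "'a \<Rightarrow> 'a \<Rightarrow> bool" and A B :: "nat \<Rightarrow> 'a set"
  assumes ramsey: "homogeneous_pairs_bound n (insert None (Some ` ({..<m} \<times> {..<m}))) (N + N)"
    and "k \<le> N" "l \<le> N"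
    and size: "\<forall>i\<in>{1..n}. finite (A i) \<and> finite (B i) \<and> card (A i) = m \<and> card (B i) = m"
    and disj: "\<forall>i\<in>{1..n}. \<forall>j\<in>{1..n}. A i \<inter> B j = {} \<and>
        (i \<noteq> j \<longrightarrow> A i \<inter> A j = {} \<and> B i \<inter> B j = {})"
  shows "(\<exists>X Y. X \<subseteq> (\<Union>i\<in>{1..n}. A i) \<and> Y \<subseteq> (\<Union>i\<in>{1..n}. B i) \<and>
        card X = l \<and> card Y = l \<and> (\<forall>x\<in>X. \<forall>y\<in>Y. \<not> E x y))
    \<or> (\<exists>I J. I \<subseteq> {1..n} \<and> J \<subseteq> {1..n} \<and> card I = k \<and> card J = k \<and>
        G_complete E (\<Union>i\<in>I. A i) (\<Union>j\<in>J. B j))"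
proof -
  obtain ga where ga: "\<forall>i\<in>{1..n}. bij_betw (ga i) {..<m} (A i)"
    using obtain_uniform_enumerations[of "{1..n}" A m] size by blast
  obtain gb where gb: "\<forall>j\<in>{1..n}. bij_betw (gb j) {..<m} (B j)"
    using obtain_uniform_enumerations[of "{1..n}" B m] size by blast
  obtain I0 J0 where IJ0: "I0 \<subseteq> {1..n}" "J0 \<subseteq> {1..n}" "card I0 = N" "card J0 = N"
    and dichotomy: "(\<forall>i\<in>I0. \<forall>j\<in>J0. \<forall>x\<in>A i. \<forall>y\<in>B j. E x y) \<or>
      (\<exists>p<m. \<exists>q<m. \<forall>i\<in>I0. \<forall>j\<in>J0. \<not> E (ga i p) (gb j q))"
    by (rule obtain_homogeneous_block_pairs[OF ramsey ga gb])
  have subsets: "\<exists>I J. I \<subseteq> I0 \<and> J \<subseteq> J0 \<and> card I = r \<and> card J = r" if "r \<le> N" for r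
  proof -
    have "r \<le> card I0" "r \<le> card J0" using IJ0(3,4) that by simp_all
    then obtain I J where "I \<subseteq> I0" "card I = r" "J \<subseteq> J0" "card J = r"
      by (meson obtain_subset_with_card_n)
    then show ?thesis by blast
  qed
  show ?thesis
  proof (cases "\<forall>i\<in>I0. \<forall>j\<in>J0. \<forall>x\<in>A i. \<forall>y\<in>B j. E x y")
    case True
    obtain I J where IJ: "I \<subseteq> I0" "J \<subseteq> J0" "card I = k" "card J = k"
      using subsets[OF \<open>k \<le> N\<close>] by blast
    have "G_complete E (\<Union>i\<in>I. A i) (\<Union>j\<in>J. B j)"
      by (rule G_complete_UN) (use True disj IJ IJ0 in blast)+
    moreover have "I \<subseteq> {1..n}" "J \<subseteq> {1..n}" using IJ IJ0 by auto
    ultimately show ?thesis using IJ(3,4) by blast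
  next
    case False
    then obtain p q where "p < m" "q < m" and nonadj: "\<forall>i\<in>I0. \<forall>j\<in>J0. \<not> E (ga i p) (gb j q)"
      using dichotomy by blast
    then have in_blocks: "ga i p \<in> A i" "gb i q \<in> B i" if "i \<in> {1..n}" for i
      using bspec[OF ga that] bspec[OF gb that] unfolding bij_betw_def by auto
    obtain I J where IJ: "I \<subseteq> I0" "J \<subseteq> J0" "card I = l" "card J = l"
      using subsets[OF \<open>l \<le> N\<close>] by blast
    have "I \<subseteq> {1..n}" "J \<subseteq> {1..n}" using IJ IJ0 by auto
    have "card ((\<lambda>i. ga i p) ` I) = l"
      unfolding IJ(3)[symmetric] by (rule card_image_of_disjoint_family[where A = A])
        (use in_blocks disj \<open>I \<subseteq> {1..n}\<close> in \<open>auto simp: subset_iff\<close>)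
    moreover have "card ((\<lambda>j. gb j q) ` J) = l"
      unfolding IJ(4)[symmetric] by (rule card_image_of_disjoint_family[where A = B])
        (use in_blocks disj \<open>J \<subseteq> {1..n}\<close> in \<open>auto simp: subset_iff\<close>)
    moreover have "(\<lambda>i. ga i p) ` I \<subseteq> (\<Union>i\<in>{1..n}. A i)" "(\<lambda>j. gb j q) ` J \<subseteq> (\<Union>i\<in>{1..n}. B i)"
      using in_blocks \<open>I \<subseteq> {1..n}\<close> \<open>J \<subseteq> {1..n}\<close> by blast+
    moreover have "\<forall>x\<in>(\<lambda>i. ga i p) ` I. \<forall>y\<in>(\<lambda>j. gb j q) ` J. \<not> E x y"
      using nonadj IJ by blast
    ultimately show ?thesis by blast
  qed
qed

theorem theorem3p1:
  fixes k m l :: nat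
  shows "\<exists>n::nat. \<forall>(V::'a set) E (A::nat \<Rightarrow> 'a set) (B::nat \<Rightarrow> 'a set).
    simple_graph V E \<longrightarrow>
    (\<forall>i\<in>{1..n}. A i \<subseteq> V \<and> B i \<subseteq> V \<and> card (A i) = m \<and> card (B i) = m) \<longrightarrow>
    (\<forall>i\<in>{1..n}. \<forall>j\<in>{1..n}. A i \<inter> B j = {} \<and>
        (i \<noteq> j \<longrightarrow> A i \<inter> A j = {} \<and> B i \<inter> B j = {})) \<longrightarrow>
    (\<exists>X Y. X \<subseteq> (\<Union>i\<in>{1..n}. A i) \<and> Y \<subseteq> (\<Union>i\<in>{1..n}. B i) \<and>
        card X = l \<and> card Y = l \<and> (\<forall>x\<in>X. \<forall>y\<in>Y. \<not> E x y))
    \<or> (\<exists>I J. I \<subseteq> {1..n} \<and> J \<subseteq> {1..n} \<and> card I = k \<and> card J = k \<and>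
        G_complete E (\<Union>i\<in>I. A i) (\<Union>j\<in>J. B j))"
proof -
  have "finite (insert None (Some ` ({..<m} \<times> {..<m})))" by simp
  then obtain n where ramsey:
    "homogeneous_pairs_bound n (insert None (Some ` ({..<m} \<times> {..<m}))) (max k l + max k l)"
    using ex_homogeneous_pairs_bound by blast
  show ?thesis
  proof (intro exI[of _ n] allI impI anticomplete_or_complete_blocks[OF ramsey])
    fix V E and A B :: "nat \<Rightarrow> 'a set"
    assume "simple_graph V E" "\<forall>i\<in>{1..n}. A i \<subseteq> V \<and> B i \<subseteq> V \<and> card (A i) = m \<and> card (B i) = m"
      "\<forall>i\<in>{1..n}. \<forall>j\<in>{1..n}. A i \<inter> B j = {} \<and> (i \<noteq> j \<longrightarrow> A i \<inter> A j = {} \<and> B i \<inter> B j = {})"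
    then show "\<forall>i\<in>{1..n}. finite (A i) \<and> finite (B i) \<and> card (A i) = m \<and> card (B i) = m"
      unfolding simple_graph_def by (auto intro: finite_subset)
  qed simp_all
qed

end
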